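(* Let $p,q,r$ be integers with $1<p<q<r$, $p$ odd and $pq+pr-qr=1$. Then $p+1\le q\le 2p-1$. *)

theory Defs
  imports Main
begin

end

theory Submission
  imports Defs
begin

(* The relation rewrites as (q - p) (r - p) = p^2 - 1 < p^2. The smaller factor q - p is
   then below p, i.e. q \<le> 2p - 1. *)

lemma less_of_mult_less_square:
  fixes x y p :: "'a::linordered_idom"
  assumes "x \<le> y" and "0 \<le> p" and "x * y < p * p"
  shows "x < p"
proof (rule ccontr)
  assume "\<not> x < p"
  then have "p \<le> x" by simp
  with assms(1,2) have "p * p \<le> x * y"
    by (intro mult_mono) auto
  with assms(3) show False by simp
qed

theorem lemma3p1:
  fixes p q r :: int
  assumes "1 < p" and "p < q" and "q < r" and "odd p"
    and "p * q + p * r - q * r = 1"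
  shows "p + 1 \<le> q \<and> q \<le> 2 * p - 1"
proof -
  have product: "(q - p) * (r - p) = p * p - 1"
    using assms(5) by (simp add: algebra_simps)
  have "q - p < p"
    by (rule less_of_mult_less_square[where y = "r - p"]) (use assms(1,3) product in auto)
  with assms(2) show ?thesis by simp
qed

end
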